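(* Let $(X_1,\dots,X_d)$ be a non-degenerate $d$-dimensional $1$-Meixner random vector with $E[X_k]=0$ and $E[X_iX_j]=\delta_{i,j}$ for all $i,j,k$, and let $\alpha_{i,j,k}$ be the real numbers with $[U_i,X_j]=\sum_{k}\alpha_{i,j,k}X_k+\beta_{i,j}I$. Then for all $(i,j,k)\in\{1,\dots,d\}^3$: (1) $\alpha_{i,j,k}=\alpha_{j,i,k}$; (2) $\alpha_{i,j,k}=\alpha_{i,k,j}$; (3) for every permutation $\pi$ of $(i,j,k)$, $\alpha_{\pi(i),\pi(j),\pi(k)}=\alpha_{i,j,k}$.
   Context: Let $X_1,\dots,X_d$ be real random variables on $(\Omega,\mathcal F,P)$ with finite moments of all orders. $F$ is the space of polynomial random variables $f(X_1,\dots,X_d)$ (complex coefficients), $F_n$ those of degree $\le n$, $G_0=F_0$, $G_n=F_n\ominus F_{n-1}$ in $L^2(P)$. For $f\in G_n$, $X_if\in G_{n-1}\oplus G_n\oplus G_{n+1}$; its components define $a^-(i)f,a^0(i)f,a^+(i)f$ respectively, extended linearly to $F$. $U_i:=a^-(i)+\tfrac12a^0(i)$ (semi-annihilation operator). $(X_1,\dots,X_d)$ is a $d$-dimensional $1$-Meixner random vector if there are reals $\alpha_{i,j,k},\beta_{i,j}$ with $[U_i,X_j]=\sum_k\alpha_{i,j,k}X_k+\beta_{i,j}I$ on $F$ for all $i,j$ (with $X_j$ the multiplication operator, $I$ the identity); it is non-degenerate if $I,X_1,\dots,X_d$ are linearly independent operators on $F$. *)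

theory Defs
  imports "HOL-Probability.Probability"
begin

text \<open>Random vector (X_0,...,X_{d-1}) (0-based indexing of the paper's X_1..X_d).
  Polynomial random variables are complex-valued functions on the sample space;
  elements of L^2 that agree almost everywhere are identified by stating all
  operator identities almost everywhere.\<close>

definition mono_rv :: "nat \<Rightarrow> (nat \<Rightarrow> 'a \<Rightarrow> real) \<Rightarrow> (nat \<Rightarrow> nat) \<Rightarrow> 'a \<Rightarrow> complex" where
  "mono_rv d X \<alpha> \<omega> = (\<Prod>i<d. complex_of_real (X i \<omega>) ^ \<alpha> i)"

definition poly_rv_deg :: "nat \<Rightarrow> (nat \<Rightarrow> 'a \<Rightarrow> real) \<Rightarrow> nat \<Rightarrow> ('a \<Rightarrow> complex) set" where
  "poly_rv_deg d X n = {f. \<exists>A c. finite A \<and> (\<forall>\<alpha>\<in>A. (\<Sum>i<d. \<alpha> i) \<le> n) \<and>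
      f = (\<lambda>\<omega>. \<Sum>\<alpha>\<in>A. c \<alpha> * mono_rv d X \<alpha> \<omega>)}"

definition poly_rv :: "nat \<Rightarrow> (nat \<Rightarrow> 'a \<Rightarrow> real) \<Rightarrow> ('a \<Rightarrow> complex) set" where
  "poly_rv d X = (\<Union>n. poly_rv_deg d X n)"

definition ip :: "'a measure \<Rightarrow> ('a \<Rightarrow> complex) \<Rightarrow> ('a \<Rightarrow> complex) \<Rightarrow> complex" where
  "ip M f g = (LINT \<omega>|M. f \<omega> * cnj (g \<omega>))"

definition G_space :: "'a measure \<Rightarrow> nat \<Rightarrow> (nat \<Rightarrow> 'a \<Rightarrow> real) \<Rightarrow> nat \<Rightarrow> ('a \<Rightarrow> complex) set" where
  "G_space M d X n = (if n = 0 then poly_rv_deg d X 0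
     else {f \<in> poly_rv_deg d X n. \<forall>g \<in> poly_rv_deg d X (n - 1). ip M f g = 0})"

text \<open>Orthogonal projection onto G_n (a representative; unique up to a.e. equality).\<close>
definition proj_G :: "'a measure \<Rightarrow> nat \<Rightarrow> (nat \<Rightarrow> 'a \<Rightarrow> real) \<Rightarrow> nat \<Rightarrow> ('a \<Rightarrow> complex) \<Rightarrow> 'a \<Rightarrow> complex" where
  "proj_G M d X n f = (SOME g. g \<in> G_space M d X n \<and>
      (\<forall>h \<in> G_space M d X n. ip M (\<lambda>\<omega>. f \<omega> - g \<omega>) h = 0))"

definition poly_degree :: "nat \<Rightarrow> (nat \<Rightarrow> 'a \<Rightarrow> real) \<Rightarrow> ('a \<Rightarrow> complex) \<Rightarrow> nat" where
  "poly_degree d X f = (LEAST n. f \<in> poly_rv_deg d X n)"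

definition mult_op :: "(nat \<Rightarrow> 'a \<Rightarrow> real) \<Rightarrow> nat \<Rightarrow> ('a \<Rightarrow> complex) \<Rightarrow> 'a \<Rightarrow> complex" where
  "mult_op X j f = (\<lambda>\<omega>. complex_of_real (X j \<omega>) * f \<omega>)"

text \<open>a^-(i): for f in G_n, the G_{n-1}-component of X_i f; extended linearly to F
  via the decomposition f = sum_n (projection of f onto G_n).\<close>
definition ann_op :: "'a measure \<Rightarrow> nat \<Rightarrow> (nat \<Rightarrow> 'a \<Rightarrow> real) \<Rightarrow> nat \<Rightarrow> ('a \<Rightarrow> complex) \<Rightarrow> 'a \<Rightarrow> complex" where
  "ann_op M d X i f = (\<lambda>\<omega>. \<Sum>n\<in>{1..poly_degree d X f}.
      proj_G M d X (n - 1) (mult_op X i (proj_G M d X n f)) \<omega>)"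

text \<open>a^0(i): for f in G_n, the G_n-component of X_i f; extended linearly.\<close>
definition pres_op :: "'a measure \<Rightarrow> nat \<Rightarrow> (nat \<Rightarrow> 'a \<Rightarrow> real) \<Rightarrow> nat \<Rightarrow> ('a \<Rightarrow> complex) \<Rightarrow> 'a \<Rightarrow> complex" where
  "pres_op M d X i f = (\<lambda>\<omega>. \<Sum>n\<in>{0..poly_degree d X f}.
      proj_G M d X n (mult_op X i (proj_G M d X n f)) \<omega>)"

definition semi_ann :: "'a measure \<Rightarrow> nat \<Rightarrow> (nat \<Rightarrow> 'a \<Rightarrow> real) \<Rightarrow> nat \<Rightarrow> ('a \<Rightarrow> complex) \<Rightarrow> 'a \<Rightarrow> complex" where
  "semi_ann M d X i f = (\<lambda>\<omega>. ann_op M d X i f \<omega> + (1/2) * pres_op M d X i f \<omega>)"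

definition finite_moments_vector :: "'a measure \<Rightarrow> nat \<Rightarrow> (nat \<Rightarrow> 'a \<Rightarrow> real) \<Rightarrow> bool" where
  "finite_moments_vector M d X \<longleftrightarrow> prob_space M \<and>
     (\<forall>i<d. X i \<in> borel_measurable M \<and> (\<forall>n::nat. integrable M (\<lambda>\<omega>. \<bar>X i \<omega>\<bar> ^ n)))"

definition one_Meixner_with :: "'a measure \<Rightarrow> nat \<Rightarrow> (nat \<Rightarrow> 'a \<Rightarrow> real)
    \<Rightarrow> (nat \<Rightarrow> nat \<Rightarrow> nat \<Rightarrow> real) \<Rightarrow> (nat \<Rightarrow> nat \<Rightarrow> real) \<Rightarrow> bool" where
  "one_Meixner_with M d X \<alpha> \<beta> \<longleftrightarrow>
     (\<forall>i<d. \<forall>j<d. \<forall>f \<in> poly_rv d X. AE \<omega> in M.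
        semi_ann M d X i (mult_op X j f) \<omega> - complex_of_real (X j \<omega>) * semi_ann M d X i f \<omega>
        = (\<Sum>k<d. complex_of_real (\<alpha> i j k) * complex_of_real (X k \<omega>)) * f \<omega>
          + complex_of_real (\<beta> i j) * f \<omega>)"

definition non_degenerate :: "'a measure \<Rightarrow> nat \<Rightarrow> (nat \<Rightarrow> 'a \<Rightarrow> real) \<Rightarrow> bool" where
  "non_degenerate M d X \<longleftrightarrow>
     (\<forall>(c0::complex) (c::nat \<Rightarrow> complex).
        (\<forall>f \<in> poly_rv d X. AE \<omega> in M.
           c0 * f \<omega> + (\<Sum>k<d. c k * complex_of_real (X k \<omega>) * f \<omega>) = 0)
        \<longrightarrow> c0 = 0 \<and> (\<forall>k<d. c k = 0))"

end

theory Submission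
  imports Defs
begin

text \<open>Apply the commutation relation to the constant polynomial 1. Since \<open>U\<^sub>i 1 = 0\<close>,
  it reads \<open>U\<^sub>i X\<^sub>j = \<Sum>\<^sub>k \<alpha>\<^sub>i\<^sub>j\<^sub>k X\<^sub>k + \<beta>\<^sub>i\<^sub>j\<close>. For a centred vector with identity covariance,
  \<open>G\<^sub>0\<close> is the constants and \<open>G\<^sub>1\<close> is spanned by the orthonormal \<open>X\<^sub>k\<close>, so the projections are
  explicit and \<open>U\<^sub>i X\<^sub>j = \<delta>\<^sub>i\<^sub>j + 1/2 \<Sum>\<^sub>k E[X\<^sub>i X\<^sub>j X\<^sub>k] X\<^sub>k\<close>. Non-degeneracy makes the
  coefficients of \<open>1, X\<^sub>1, \<dots>, X\<^sub>d\<close> unique, hence \<open>\<alpha>\<^sub>i\<^sub>j\<^sub>k = E[X\<^sub>i X\<^sub>j X\<^sub>k] / 2\<close>, which is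
  invariant under all permutations of \<open>(i, j, k)\<close>.\<close>

lemma mono_rv_zero: "mono_rv d X (\<lambda>_. 0) = (\<lambda>_. 1)"
  by (simp add: mono_rv_def fun_eq_iff)

lemma mono_rv_unit:
  "mono_rv d X (\<lambda>i. if i = k then 1 else 0) =
     (if k < d then (\<lambda>\<omega>. complex_of_real (X k \<omega>)) else (\<lambda>_. 1))"
proof -
  have "mono_rv d X (\<lambda>i. if i = k then 1 else 0) \<omega> =
          (\<Prod>i<d. if i = k then complex_of_real (X k \<omega>) else 1)" for \<omega>
    unfolding mono_rv_def by (rule prod.cong) auto
  then show ?thesis by (simp add: fun_eq_iff)
qed

lemma sum_le_one_cases:
  fixes \<alpha> :: "nat \<Rightarrow> nat"
  assumes "(\<Sum>i<d. \<alpha> i) \<le> 1"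
  obtains "\<forall>i<d. \<alpha> i = 0" | k where "k < d" "\<forall>i<d. \<alpha> i = (if i = k then 1 else 0)"
proof (cases "\<forall>i<d. \<alpha> i = 0")
  case False
  then obtain k where k: "k < d" "\<alpha> k \<noteq> 0" by auto
  have "\<alpha> i = 0" if "i < d" "i \<noteq> k" for i
  proof -
    have "sum \<alpha> {k, i} \<le> sum \<alpha> {..<d}" by (rule sum_mono2) (use k that in auto)
    then show ?thesis using that k assms by simp
  qed
  moreover have "\<alpha> k = 1" using member_le_sum[of k "{..<d}" \<alpha>] k assms by simp
  ultimately show thesis using that(2) k by auto
qed

lemma mono_rv_cong: "(\<And>i. i < d \<Longrightarrow> \<alpha> i = \<beta> i) \<Longrightarrow> mono_rv d X \<alpha> = mono_rv d X \<beta>"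
  unfolding mono_rv_def by (intro ext prod.cong) auto

lemma poly_rv_deg_0_eq:
  fixes X :: "nat \<Rightarrow> 'a \<Rightarrow> real"
  shows "poly_rv_deg d X 0 = {f. \<exists>c. f = (\<lambda>_::'a. c)}"
proof (intro set_eqI iffI)
  fix f assume "f \<in> poly_rv_deg d X 0"
  then obtain A c where A: "\<forall>\<alpha>\<in>A. (\<Sum>i<d. \<alpha> i) = 0"
    and f: "f = (\<lambda>\<omega>. \<Sum>\<alpha>\<in>A. c \<alpha> * mono_rv d X \<alpha> \<omega>)"
    unfolding poly_rv_deg_def by auto
  have "mono_rv d X \<alpha> = mono_rv d X (\<lambda>_. 0)" if "\<alpha> \<in> A" for \<alpha>
    by (rule mono_rv_cong) (use A that in auto)
  then have "f = (\<lambda>_. \<Sum>\<alpha>\<in>A. c \<alpha>)"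
    unfolding f by (simp add: mono_rv_zero)
  then show "f \<in> {f. \<exists>c. f = (\<lambda>_. c)}" by blast
next
  fix f :: "'a \<Rightarrow> complex" assume "f \<in> {f. \<exists>c. f = (\<lambda>_. c)}"
  then obtain c where "f = (\<lambda>_. c)" by blast
  then show "f \<in> poly_rv_deg d X 0"
    unfolding poly_rv_deg_def by (intro CollectI exI[of _ "{\<lambda>_. 0}"] exI[of _ "\<lambda>_. c"]) (simp add: mono_rv_zero)
qed

definition affine_rv :: "nat \<Rightarrow> (nat \<Rightarrow> 'a \<Rightarrow> real) \<Rightarrow> ('a \<Rightarrow> complex) set" where
  "affine_rv d X = {f. \<exists>c0 c. f = (\<lambda>\<omega>. c0 + (\<Sum>k<d. c k * complex_of_real (X k \<omega>)))}"

lemma affine_rv_lincomb: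
  assumes "finite A" and "\<And>a. a \<in> A \<Longrightarrow> g a \<in> affine_rv d X"
  shows "(\<lambda>\<omega>. \<Sum>a\<in>A. u a * g a \<omega>) \<in> affine_rv d X"
proof -
  have "\<forall>a\<in>A. \<exists>c0 c. g a = (\<lambda>\<omega>. c0 + (\<Sum>k<d. c k * complex_of_real (X k \<omega>)))"
    using assms(2) unfolding affine_rv_def by blast
  then obtain c0 c where g: "\<And>a. a \<in> A \<Longrightarrow> g a = (\<lambda>\<omega>. c0 a + (\<Sum>k<d. c a k * complex_of_real (X k \<omega>)))"
    by (auto dest!: bchoice)
  have "(\<lambda>\<omega>. \<Sum>a\<in>A. u a * g a \<omega>) =
          (\<lambda>\<omega>. (\<Sum>a\<in>A. u a * c0 a) + (\<Sum>k<d. (\<Sum>a\<in>A. u a * c a k) * complex_of_real (X k \<omega>)))"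
  proof
    fix \<omega>
    have "(\<Sum>a\<in>A. u a * g a \<omega>) =
            (\<Sum>a\<in>A. u a * c0 a) + (\<Sum>a\<in>A. \<Sum>k<d. u a * c a k * complex_of_real (X k \<omega>))"
      by (simp add: g distrib_left sum.distrib sum_distrib_left mult.assoc)
    then show "(\<Sum>a\<in>A. u a * g a \<omega>) =
        (\<Sum>a\<in>A. u a * c0 a) + (\<Sum>k<d. (\<Sum>a\<in>A. u a * c a k) * complex_of_real (X k \<omega>))"
      by (subst (asm) sum.swap) (simp add: sum_distrib_right)
  qed
  then show ?thesis
    unfolding affine_rv_def by (intro CollectI exI[of _ "\<Sum>a\<in>A. u a * c0 a"] exI[of _ "\<lambda>k. \<Sum>a\<in>A. u a * c a k"])
qed

lemma mono_rv_affine: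
  assumes "(\<Sum>i<d. \<alpha> i) \<le> 1"
  shows "mono_rv d X \<alpha> \<in> affine_rv d X"
  using assms
proof (cases rule: sum_le_one_cases)
  case 1
  then have "mono_rv d X \<alpha> = mono_rv d X (\<lambda>_. 0)"
    by (intro mono_rv_cong) auto
  then have "mono_rv d X \<alpha> = (\<lambda>\<omega>. 1 + (\<Sum>k<d. 0 * complex_of_real (X k \<omega>)))"
    by (simp add: mono_rv_zero)
  then show ?thesis
    unfolding affine_rv_def by (intro CollectI exI[of _ 1] exI[of _ "\<lambda>_. 0"])
next
  case (2 k)
  then have "mono_rv d X \<alpha> = mono_rv d X (\<lambda>i. if i = k then 1 else 0)"
    by (intro mono_rv_cong) auto
  also have "\<dots> = (\<lambda>\<omega>. 0 + (\<Sum>i<d. of_bool (i = k) * complex_of_real (X i \<omega>)))"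
    using 2(1) by (simp add: mono_rv_unit)
  finally show ?thesis
    unfolding affine_rv_def by (intro CollectI exI[of _ 0] exI[of _ "\<lambda>i. of_bool (i = k)"])
qed

lemma poly_rv_deg_1_subset_affine: "poly_rv_deg d X 1 \<subseteq> affine_rv d X"
proof
  fix f assume "f \<in> poly_rv_deg d X 1"
  then obtain A c where A: "finite A" "\<forall>\<alpha>\<in>A. (\<Sum>i<d. \<alpha> i) \<le> 1"
    and f: "f = (\<lambda>\<omega>. \<Sum>\<alpha>\<in>A. c \<alpha> * mono_rv d X \<alpha> \<omega>)"
    unfolding poly_rv_deg_def by blast
  show "f \<in> affine_rv d X"
    unfolding f by (rule affine_rv_lincomb[OF A(1)]) (use A(2) mono_rv_affine in blast)
qed

lemma affine_rv_subset_poly_rv_deg_1: "affine_rv d X \<subseteq> poly_rv_deg d X 1"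
proof
  fix f assume "f \<in> affine_rv d X"
  then obtain c0 c where f: "f = (\<lambda>\<omega>. c0 + (\<Sum>k<d. c k * complex_of_real (X k \<omega>)))"
    unfolding affine_rv_def by blast
  define e :: "nat \<Rightarrow> nat \<Rightarrow> nat" where "e k = (\<lambda>i. if i = k then 1 else 0)" for k
  define c' where "c' \<alpha> = (c(d := c0)) (inv e \<alpha>)" for \<alpha>
  have "inj e"
    unfolding e_def inj_def by (metis zero_neq_one)
  \<comment> \<open>The unit exponent \<open>e d\<close> lies outside the variables and gives the monomial 1.\<close>
  have "f = (\<lambda>\<omega>. \<Sum>\<alpha>\<in>e ` {..d}. c' \<alpha> * mono_rv d X \<alpha> \<omega>)"
  proof
    fix \<omega>
    have "(\<Sum>\<alpha>\<in>e ` {..d}. c' \<alpha> * mono_rv d X \<alpha> \<omega>) = (\<Sum>k\<le>d. (c(d := c0)) k * mono_rv d X (e k) \<omega>)"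
      by (rule sum.reindex_cong[of e]) (simp_all add: c'_def inj_on_subset[OF \<open>inj e\<close>] inv_f_f[OF \<open>inj e\<close>])
    also have "\<dots> = (\<Sum>k<d. c k * mono_rv d X (e k) \<omega>) + c0 * mono_rv d X (e d) \<omega>"
      by (simp add: lessThan_Suc_atMost[symmetric])
    also have "\<dots> = f \<omega>"
      by (simp add: f e_def mono_rv_unit)
    finally show "f \<omega> = (\<Sum>\<alpha>\<in>e ` {..d}. c' \<alpha> * mono_rv d X \<alpha> \<omega>)" by simp
  qed
  moreover have "\<forall>\<alpha>\<in>e ` {..d}. (\<Sum>i<d. \<alpha> i) \<le> 1"
    by (simp add: e_def)
  ultimately show "f \<in> poly_rv_deg d X 1"
    unfolding poly_rv_deg_def by (intro CollectI exI[of _ "e ` {..d}"] exI[of _ c']) simp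
qed

lemma poly_rv_deg_1_eq: "poly_rv_deg d X 1 = affine_rv d X"
  using poly_rv_deg_1_subset_affine affine_rv_subset_poly_rv_deg_1 by blast

lemma G_space_1_eq_affine: "G_space M d X 1 = {f \<in> affine_rv d X. \<forall>c. ip M f (\<lambda>_. c) = 0}"
  unfolding G_space_def poly_rv_deg_1_eq by (auto simp: poly_rv_deg_0_eq)

lemma complex_X_in_poly_rv_deg_1: "j < d \<Longrightarrow> (\<lambda>\<omega>. complex_of_real (X j \<omega>)) \<in> poly_rv_deg d X 1"
  unfolding poly_rv_deg_1_eq affine_rv_def
  by (intro CollectI exI[of _ 0] exI[of _ "\<lambda>k. of_bool (k = j)"]) simp

lemma poly_degree_const: "poly_degree d X (\<lambda>_. c) = 0"
  unfolding poly_degree_def by (rule Least_eq_0) (auto simp: poly_rv_deg_0_eq)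

lemma non_degenerate_coeffs_unique:
  assumes nondeg: "non_degenerate M d X"
    and eq: "AE \<omega> in M. a0 + (\<Sum>k<d. a k * complex_of_real (X k \<omega>)) =
                          b0 + (\<Sum>k<d. b k * complex_of_real (X k \<omega>))"
  shows "a0 = b0 \<and> (\<forall>k<d. a k = b k)"
proof -
  have "AE \<omega> in M. (a0 - b0) * f \<omega> + (\<Sum>k<d. (a k - b k) * complex_of_real (X k \<omega>) * f \<omega>) = 0" for f
    using eq
  proof eventually_elim
    case (elim \<omega>)
    have "(a0 - b0) * f \<omega> + (\<Sum>k<d. (a k - b k) * complex_of_real (X k \<omega>) * f \<omega>) =
          ((a0 + (\<Sum>k<d. a k * complex_of_real (X k \<omega>))) -
           (b0 + (\<Sum>k<d. b k * complex_of_real (X k \<omega>)))) * f \<omega>"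
      by (simp add: algebra_simps sum_subtractf sum_distrib_left sum_distrib_right)
    with elim show ?case by simp
  qed
  then have "a0 - b0 = 0 \<and> (\<forall>k<d. a k - b k = 0)"
    using nondeg[unfolded non_degenerate_def, rule_format, of "a0 - b0" "\<lambda>k. a k - b k"] by blast
  then show ?thesis
    by simp
qed

definition third_moment :: "'a measure \<Rightarrow> (nat \<Rightarrow> 'a \<Rightarrow> real) \<Rightarrow> nat \<Rightarrow> nat \<Rightarrow> nat \<Rightarrow> real" where
  "third_moment M X i j k = (LINT \<omega>|M. X i \<omega> * X j \<omega> * X k \<omega>)"

lemma third_moment_swap_left: "third_moment M X i j k = third_moment M X j i k"
  unfolding third_moment_def by (simp add: mult_ac)

lemma third_moment_swap_right: "third_moment M X i j k = third_moment M X i k j"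
  unfolding third_moment_def by (simp add: mult_ac)

lemma third_moment_permute:
  fixes p t :: "nat \<Rightarrow> nat"
  assumes "bij_betw p {0..<3} {0..<3}"
  shows "third_moment M X (t (p 0)) (t (p 1)) (t (p 2)) = third_moment M X (t 0) (t 1) (t 2)"
proof -
  have "(\<Prod>m\<in>{0..<3::nat}. X (t (p m)) \<omega>) = (\<Prod>m\<in>{0..<3}. X (t m) \<omega>)" for \<omega>
    using prod.reindex_bij_betw[OF assms, of "\<lambda>m. X (t m) \<omega>"] .
  then show ?thesis
    unfolding third_moment_def by (simp add: eval_nat_numeral atLeast0_lessThan_Suc mult_ac)
qed

lemma abs_mult_le_power2_sum: "\<bar>a * b\<bar> \<le> \<bar>a\<bar> ^ 2 + \<bar>b\<bar> ^ 2" for a b :: real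
proof -
  define m where "m = max \<bar>a\<bar> \<bar>b\<bar>"
  have "\<bar>a * b\<bar> \<le> m ^ 2"
    unfolding abs_mult power2_eq_square by (intro mult_mono) (auto simp: m_def)
  also have "\<dots> \<le> \<bar>a\<bar> ^ 2 + \<bar>b\<bar> ^ 2"
    unfolding m_def by (auto simp: max_def)
  finally show ?thesis .
qed

lemma abs_mult3_le_power3_sum: "\<bar>a * b * c\<bar> \<le> \<bar>a\<bar> ^ 3 + \<bar>b\<bar> ^ 3 + \<bar>c\<bar> ^ 3" for a b c :: real
proof -
  define m where "m = max \<bar>a\<bar> (max \<bar>b\<bar> \<bar>c\<bar>)"
  have "\<bar>a * b * c\<bar> \<le> m ^ 3"
    unfolding abs_mult power3_eq_cube by (intro mult_mono) (auto simp: m_def)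
  also have "\<dots> \<le> \<bar>a\<bar> ^ 3 + \<bar>b\<bar> ^ 3 + \<bar>c\<bar> ^ 3"
    unfolding m_def by (auto simp: max_def)
  finally show ?thesis .
qed

locale standardized_vector = prob_space M for M :: "'a measure" +
  fixes d :: nat and X :: "nat \<Rightarrow> 'a \<Rightarrow> real"
  assumes X_measurable: "i < d \<Longrightarrow> X i \<in> borel_measurable M"
    and integrable_abs_power: "i < d \<Longrightarrow> integrable M (\<lambda>\<omega>. \<bar>X i \<omega>\<bar> ^ n)"
    and mean_zero: "k < d \<Longrightarrow> expectation (X k) = 0"
    and covariance: "i < d \<Longrightarrow> j < d \<Longrightarrow> expectation (\<lambda>\<omega>. X i \<omega> * X j \<omega>) = of_bool (i = j)"
begin

lemma integrable_X: "i < d \<Longrightarrow> integrable M (X i)"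
  using integrable_abs_power[of i 1] integrable_abs_iff[OF X_measurable] by simp

lemma integrable_X_mult_X:
  assumes "i < d" "j < d"
  shows "integrable M (\<lambda>\<omega>. X i \<omega> * X j \<omega>)"
proof (rule Bochner_Integration.integrable_bound)
  show "integrable M (\<lambda>\<omega>. \<bar>X i \<omega>\<bar> ^ 2 + \<bar>X j \<omega>\<bar> ^ 2)"
    using assms by (intro Bochner_Integration.integrable_add integrable_abs_power)
  show "(\<lambda>\<omega>. X i \<omega> * X j \<omega>) \<in> borel_measurable M"
    using assms by (intro borel_measurable_times X_measurable)
  show "AE \<omega> in M. norm (X i \<omega> * X j \<omega>) \<le> norm (\<bar>X i \<omega>\<bar> ^ 2 + \<bar>X j \<omega>\<bar> ^ 2)"
    using abs_mult_le_power2_sum by (intro AE_I2) simp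
qed

lemma integrable_X_mult_X_mult_X:
  assumes "i < d" "j < d" "k < d"
  shows "integrable M (\<lambda>\<omega>. X i \<omega> * X j \<omega> * X k \<omega>)"
proof (rule Bochner_Integration.integrable_bound)
  show "integrable M (\<lambda>\<omega>. \<bar>X i \<omega>\<bar> ^ 3 + \<bar>X j \<omega>\<bar> ^ 3 + \<bar>X k \<omega>\<bar> ^ 3)"
    using assms by (intro Bochner_Integration.integrable_add integrable_abs_power)
  show "(\<lambda>\<omega>. X i \<omega> * X j \<omega> * X k \<omega>) \<in> borel_measurable M"
    using assms by (intro borel_measurable_times X_measurable)
  show "AE \<omega> in M. norm (X i \<omega> * X j \<omega> * X k \<omega>) \<le> norm (\<bar>X i \<omega>\<bar> ^ 3 + \<bar>X j \<omega>\<bar> ^ 3 + \<bar>X k \<omega>\<bar> ^ 3)"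
    using abs_mult3_le_power3_sum by (intro AE_I2) simp
qed

lemma integrable_complex_X [simp]: "k < d \<Longrightarrow> integrable M (\<lambda>\<omega>. complex_of_real (X k \<omega>))"
  using integrable_X by auto

lemma integrable_complex_X_mult_X [simp]:
  "i < d \<Longrightarrow> j < d \<Longrightarrow> integrable M (\<lambda>\<omega>. complex_of_real (X i \<omega>) * complex_of_real (X j \<omega>))"
  using integrable_X_mult_X by (simp flip: of_real_mult)

lemma integrable_complex_X_mult_X_mult_X [simp]:
  "i < d \<Longrightarrow> j < d \<Longrightarrow> k < d \<Longrightarrow>
    integrable M (\<lambda>\<omega>. complex_of_real (X i \<omega>) * complex_of_real (X j \<omega>) * complex_of_real (X k \<omega>))"
  using integrable_X_mult_X_mult_X by (simp flip: of_real_mult)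

lemma integral_complex_X_mult_X:
  "i < d \<Longrightarrow> j < d \<Longrightarrow> (LINT \<omega>|M. complex_of_real (X i \<omega>) * complex_of_real (X j \<omega>)) = of_bool (i = j)"
  using covariance by (simp flip: of_real_mult)

lemma integral_lincomb_X: "(LINT \<omega>|M. (\<Sum>k<d. c k * complex_of_real (X k \<omega>))) = 0"
  using mean_zero by (simp add: integral_sum)

lemma integrable_lincomb_X [simp]:
  "integrable M (\<lambda>\<omega>. \<Sum>k<d. c k * complex_of_real (X k \<omega>))"
  by auto

lemma integrable_lincomb_X_mult_X [simp]:
  "l < d \<Longrightarrow> integrable M (\<lambda>\<omega>. (\<Sum>k<d. c k * complex_of_real (X k \<omega>)) * complex_of_real (X l \<omega>))"
  unfolding sum_distrib_right mult.assoc
  by auto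

lemma integral_lincomb_X_mult_X:
  assumes "l < d"
  shows "(LINT \<omega>|M. (\<Sum>k<d. c k * complex_of_real (X k \<omega>)) * complex_of_real (X l \<omega>)) = c l"
proof -
  have "(LINT \<omega>|M. (\<Sum>k<d. c k * complex_of_real (X k \<omega>)) * complex_of_real (X l \<omega>)) =
          (\<Sum>k<d. c k * (LINT \<omega>|M. complex_of_real (X k \<omega>) * complex_of_real (X l \<omega>)))"
    using assms by (simp add: sum_distrib_right mult.assoc integral_sum)
  also have "\<dots> = c l"
    using assms by (simp add: integral_complex_X_mult_X)
  finally show ?thesis .
qed

lemma G_space_0_eq: "G_space M d X 0 = {f. \<exists>c. f = (\<lambda>_. c)}"
  unfolding G_space_def by (simp add: poly_rv_deg_0_eq)

lemma G_space_1_eq: "G_space M d X 1 = {f. \<exists>c. f = (\<lambda>\<omega>. \<Sum>k<d. c k * complex_of_real (X k \<omega>))}"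
proof (intro set_eqI iffI)
  fix f assume f: "f \<in> G_space M d X 1"
  then obtain c0 c where f_eq: "f = (\<lambda>\<omega>. c0 + (\<Sum>k<d. c k * complex_of_real (X k \<omega>)))"
    unfolding G_space_1_eq_affine affine_rv_def by auto
  have "c0 = ip M f (\<lambda>_. 1)"
    unfolding ip_def f_eq by (simp add: integral_lincomb_X prob_space)
  also have "\<dots> = 0"
    using f unfolding G_space_1_eq_affine by blast
  finally show "f \<in> {f. \<exists>c. f = (\<lambda>\<omega>. \<Sum>k<d. c k * complex_of_real (X k \<omega>))}"
    using f_eq by auto
next
  fix f assume "f \<in> {f. \<exists>c. f = (\<lambda>\<omega>. \<Sum>k<d. c k * complex_of_real (X k \<omega>))}"
  then obtain c where f_eq: "f = (\<lambda>\<omega>. \<Sum>k<d. c k * complex_of_real (X k \<omega>))" by blast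
  have "f \<in> affine_rv d X"
    unfolding affine_rv_def f_eq by (intro CollectI exI[of _ 0]) auto
  moreover have "ip M f (\<lambda>_. e) = 0" for e
    unfolding ip_def f_eq using integral_lincomb_X by simp
  ultimately show "f \<in> G_space M d X 1"
    unfolding G_space_1_eq_affine by blast
qed

lemma complex_X_in_G_space_1: "l < d \<Longrightarrow> (\<lambda>\<omega>. complex_of_real (X l \<omega>)) \<in> G_space M d X 1"
  unfolding G_space_1_eq by (intro CollectI exI[of _ "\<lambda>k. of_bool (k = l)"]) (simp add: fun_eq_iff)

lemma proj_G_0:
  assumes "integrable M f"
  shows "proj_G M d X 0 f = (\<lambda>_. LINT \<omega>|M. f \<omega>)"
  unfolding proj_G_def
proof (rule some_equality)
  show "(\<lambda>_. LINT \<omega>|M. f \<omega>) \<in> G_space M d X 0 \<and>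
      (\<forall>h\<in>G_space M d X 0. ip M (\<lambda>\<omega>. f \<omega> - (LINT \<omega>|M. f \<omega>)) h = 0)"
    unfolding G_space_0_eq ip_def using assms by (auto simp: prob_space)
next
  fix g assume g: "g \<in> G_space M d X 0 \<and> (\<forall>h\<in>G_space M d X 0. ip M (\<lambda>\<omega>. f \<omega> - g \<omega>) h = 0)"
  then obtain c where c: "g = (\<lambda>_. c)"
    unfolding G_space_0_eq by blast
  have "ip M (\<lambda>\<omega>. f \<omega> - g \<omega>) (\<lambda>_. 1) = 0"
    using g unfolding G_space_0_eq by blast
  then show "g = (\<lambda>_. LINT \<omega>|M. f \<omega>)"
    unfolding ip_def c using assms by (simp add: prob_space)
qed

lemma ip_lincomb_X:
  assumes "\<And>l. l < d \<Longrightarrow> integrable M (\<lambda>\<omega>. r \<omega> * complex_of_real (X l \<omega>))"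
  shows "ip M r (\<lambda>\<omega>. \<Sum>l<d. c l * complex_of_real (X l \<omega>)) =
           (\<Sum>l<d. cnj (c l) * (LINT \<omega>|M. r \<omega> * complex_of_real (X l \<omega>)))"
proof -
  have "ip M r (\<lambda>\<omega>. \<Sum>l<d. c l * complex_of_real (X l \<omega>)) =
          (LINT \<omega>|M. (\<Sum>l<d. cnj (c l) * (r \<omega> * complex_of_real (X l \<omega>))))"
    unfolding ip_def by (simp add: sum_distrib_left mult_ac)
  also have "\<dots> = (\<Sum>l<d. cnj (c l) * (LINT \<omega>|M. r \<omega> * complex_of_real (X l \<omega>)))"
    using assms by (simp add: integral_sum)
  finally show ?thesis .
qed

lemma proj_G_1:
  assumes f_X: "\<And>l. l < d \<Longrightarrow> integrable M (\<lambda>\<omega>. f \<omega> * complex_of_real (X l \<omega>))"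
  shows "proj_G M d X 1 f =
           (\<lambda>\<omega>. \<Sum>k<d. (LINT \<omega>'|M. f \<omega>' * complex_of_real (X k \<omega>')) * complex_of_real (X k \<omega>))"
    (is "_ = (\<lambda>\<omega>. \<Sum>k<d. ?e k * _)")
proof -
  have residual: "(LINT \<omega>|M. (f \<omega> - (\<Sum>k<d. c k * complex_of_real (X k \<omega>))) * complex_of_real (X l \<omega>))
      = ?e l - c l" if "l < d" for c l
    using that f_X integral_lincomb_X_mult_X[OF that, of c]
    by (simp add: left_diff_distrib)
  have residual_integrable:
    "integrable M (\<lambda>\<omega>. (f \<omega> - (\<Sum>k<d. c k * complex_of_real (X k \<omega>))) * complex_of_real (X l \<omega>))"
    if "l < d" for c l
    using that f_X by (simp add: left_diff_distrib)
  show ?thesis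
    unfolding proj_G_def
  proof (rule some_equality)
    show "(\<lambda>\<omega>. \<Sum>k<d. ?e k * complex_of_real (X k \<omega>)) \<in> G_space M d X 1 \<and>
        (\<forall>h\<in>G_space M d X 1. ip M (\<lambda>\<omega>. f \<omega> - (\<Sum>k<d. ?e k * complex_of_real (X k \<omega>))) h = 0)"
      unfolding G_space_1_eq using residual residual_integrable by (auto simp: ip_lincomb_X)
  next
    fix g assume g: "g \<in> G_space M d X 1 \<and> (\<forall>h\<in>G_space M d X 1. ip M (\<lambda>\<omega>. f \<omega> - g \<omega>) h = 0)"
    then obtain c where c: "g = (\<lambda>\<omega>. \<Sum>k<d. c k * complex_of_real (X k \<omega>))"
      unfolding G_space_1_eq by blast
    have "c l = ?e l" if "l < d" for l
    proof -
      have "ip M (\<lambda>\<omega>. f \<omega> - g \<omega>) (\<lambda>\<omega>. complex_of_real (X l \<omega>)) = 0"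
        using g complex_X_in_G_space_1[OF that] by blast
      then show ?thesis
        unfolding ip_def c using residual[OF that, of c] by simp
    qed
    then show "g = (\<lambda>\<omega>. \<Sum>k<d. ?e k * complex_of_real (X k \<omega>))"
      unfolding c by (auto intro!: sum.cong)
  qed
qed

lemma complex_X_nonconstant: "j < d \<Longrightarrow> (\<lambda>\<omega>. complex_of_real (X j \<omega>)) \<noteq> (\<lambda>_. c)"
proof
  assume j: "j < d" and eq: "(\<lambda>\<omega>. complex_of_real (X j \<omega>)) = (\<lambda>_. c)"
  have X_j: "X j = (\<lambda>_. Re c)"
  proof
    fix \<omega>
    show "X j \<omega> = Re c"
      using arg_cong[where f = Re, OF fun_cong[OF eq, of \<omega>]] by simp
  qed
  then have "Re c = 0"
    using mean_zero[OF j] by (simp add: prob_space)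
  then show False
    using covariance[OF j j] X_j by simp
qed

lemma poly_degree_X: "j < d \<Longrightarrow> poly_degree d X (\<lambda>\<omega>. complex_of_real (X j \<omega>)) = 1"
  unfolding poly_degree_def
proof (rule Least_equality)
  fix n assume "j < d" "(\<lambda>\<omega>. complex_of_real (X j \<omega>)) \<in> poly_rv_deg d X n"
  then show "1 \<le> n"
    using complex_X_nonconstant by (cases n) (auto simp: poly_rv_deg_0_eq)
qed (rule complex_X_in_poly_rv_deg_1)

lemma semi_ann_const_one: "i < d \<Longrightarrow> semi_ann M d X i (\<lambda>_. 1) = (\<lambda>_. 0)"
  by (simp add: semi_ann_def ann_op_def pres_op_def poly_degree_const proj_G_0 mult_op_def
      mean_zero prob_space integrable_X)

lemma semi_ann_X:
  assumes i: "i < d" and j: "j < d"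
  shows "semi_ann M d X i (\<lambda>\<omega>. complex_of_real (X j \<omega>)) =
           (\<lambda>\<omega>. of_bool (i = j) + 1/2 * (\<Sum>k<d. complex_of_real (third_moment M X i j k) * complex_of_real (X k \<omega>)))"
proof -
  let ?X_j = "\<lambda>\<omega>. complex_of_real (X j \<omega>)"
  have "proj_G M d X 1 ?X_j =
      (\<lambda>\<omega>. \<Sum>k<d. (LINT \<omega>'|M. complex_of_real (X j \<omega>') * complex_of_real (X k \<omega>')) * complex_of_real (X k \<omega>))"
    using j by (intro proj_G_1) simp
  also have "\<dots> = ?X_j"
    using j by (simp add: integral_complex_X_mult_X)
  finally have proj_1: "proj_G M d X 1 ?X_j = ?X_j" .
  have proj_0: "proj_G M d X 0 ?X_j = (\<lambda>_. 0)"
    using j by (simp add: proj_G_0 mean_zero)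
  have proj_X_mult_X: "proj_G M d X 1 (\<lambda>\<omega>. complex_of_real (X i \<omega>) * complex_of_real (X j \<omega>)) =
      (\<lambda>\<omega>. \<Sum>k<d. complex_of_real (third_moment M X i j k) * complex_of_real (X k \<omega>))"
  proof -
    have "proj_G M d X 1 (\<lambda>\<omega>. complex_of_real (X i \<omega>) * complex_of_real (X j \<omega>)) =
        (\<lambda>\<omega>. \<Sum>k<d. (LINT \<omega>'|M. complex_of_real (X i \<omega>') * complex_of_real (X j \<omega>') *
            complex_of_real (X k \<omega>')) * complex_of_real (X k \<omega>))"
      using i j by (intro proj_G_1) simp
    then show ?thesis
      by (simp add: third_moment_def flip: of_real_mult)
  qed
  \<comment> \<open>\<open>One_nat_def\<close> is removed so that the facts about \<open>proj_G M d X 1\<close> stay applicable.\<close>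
  have ann: "ann_op M d X i ?X_j = (\<lambda>_. of_bool (i = j))"
    using i j by (simp add: ann_op_def poly_degree_X proj_1 mult_op_def proj_G_0 integral_complex_X_mult_X
        del: One_nat_def)
  have pres: "pres_op M d X i ?X_j =
      (\<lambda>\<omega>. \<Sum>k<d. complex_of_real (third_moment M X i j k) * complex_of_real (X k \<omega>))"
  proof -
    have "{0..1::nat} = {0, 1}"
      by auto
    then show ?thesis
      using j by (simp add: pres_op_def poly_degree_X proj_0 proj_1 proj_X_mult_X mult_op_def proj_G_0
        del: One_nat_def)
  qed
  show ?thesis
    by (simp add: semi_ann_def ann pres)
qed

lemma Meixner_coeff_eq_half_third_moment:
  assumes meix: "one_Meixner_with M d X \<alpha> \<beta>" and nondeg: "non_degenerate M d X"
    and i: "i < d" and j: "j < d" and k: "k < d"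
  shows "\<alpha> i j k = third_moment M X i j k / 2"
proof -
  have "(\<lambda>_. 1) \<in> poly_rv d X"
    unfolding poly_rv_def using poly_rv_deg_0_eq[of d X] by blast
  \<comment> \<open>Since \<open>U\<^sub>i 1 = 0\<close>, the commutator applied to 1 is just \<open>U\<^sub>i X\<^sub>j\<close>.\<close>
  from meix[unfolded one_Meixner_with_def, rule_format, OF i j this]
  have "AE \<omega> in M. semi_ann M d X i (\<lambda>\<omega>. complex_of_real (X j \<omega>)) \<omega> =
      (\<Sum>k<d. complex_of_real (\<alpha> i j k) * complex_of_real (X k \<omega>)) + complex_of_real (\<beta> i j)"
    using i by (simp add: mult_op_def semi_ann_const_one)
  moreover have "1/2 * (\<Sum>k<d. complex_of_real (third_moment M X i j k) * complex_of_real (X k \<omega>)) =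
      (\<Sum>k<d. complex_of_real (third_moment M X i j k / 2) * complex_of_real (X k \<omega>))" for \<omega>
    by (simp add: sum_distrib_left)
  ultimately have "AE \<omega> in M.
      of_bool (i = j) + (\<Sum>k<d. complex_of_real (third_moment M X i j k / 2) * complex_of_real (X k \<omega>)) =
      complex_of_real (\<beta> i j) + (\<Sum>k<d. complex_of_real (\<alpha> i j k) * complex_of_real (X k \<omega>))"
    using i j by (simp add: semi_ann_X add.commute)
  from non_degenerate_coeffs_unique[OF nondeg this] k
  have "complex_of_real (third_moment M X i j k / 2) = complex_of_real (\<alpha> i j k)"
    by blast
  then show ?thesis
    unfolding of_real_eq_iff by simp
qed

end

lemma standardized_vectorI:
  assumes "finite_moments_vector M d X"
    and "\<forall>k<d. (LINT \<omega>|M. X k \<omega>) = 0"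
    and "\<forall>i<d. \<forall>j<d. (LINT \<omega>|M. X i \<omega> * X j \<omega>) = (if i = j then 1 else 0)"
  shows "standardized_vector M d X"
  using assms unfolding finite_moments_vector_def standardized_vector_def standardized_vector_axioms_def
  by auto

theorem mainTheorem2:
  fixes M :: "'a measure" and d :: nat and X :: "nat \<Rightarrow> 'a \<Rightarrow> real"
    and \<alpha> :: "nat \<Rightarrow> nat \<Rightarrow> nat \<Rightarrow> real" and \<beta> :: "nat \<Rightarrow> nat \<Rightarrow> real"
  assumes rv: "finite_moments_vector M d X"
    and meix: "one_Meixner_with M d X \<alpha> \<beta>"
    and nondeg: "non_degenerate M d X"
    and mean0: "\<forall>k<d. (LINT \<omega>|M. X k \<omega>) = 0"
    and cov: "\<forall>i<d. \<forall>j<d. (LINT \<omega>|M. X i \<omega> * X j \<omega>) = (if i = j then 1 else 0)"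
  shows "\<forall>i<d. \<forall>j<d. \<forall>k<d.
           \<alpha> i j k = \<alpha> j i k \<and>
           \<alpha> i j k = \<alpha> i k j \<and>
           (\<forall>p. bij_betw p {0..<3::nat} {0..<3::nat} \<longrightarrow>
              (let t = (\<lambda>m::nat. [i, j, k] ! m) in \<alpha> (t (p 0)) (t (p 1)) (t (p 2)) = \<alpha> i j k))"
proof (intro allI impI conjI)
  have \<alpha>_eq: "\<alpha> a b c = third_moment M X a b c / 2" if "a < d" "b < d" "c < d" for a b c
    using standardized_vector.Meixner_coeff_eq_half_third_moment
      [OF standardized_vectorI[OF rv mean0 cov] meix nondeg that] .
  fix i j k assume i: "i < d" and j: "j < d" and k: "k < d"
  show "\<alpha> i j k = \<alpha> j i k"
    using i j k by (simp add: \<alpha>_eq third_moment_swap_left[of M X i j k])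
  show "\<alpha> i j k = \<alpha> i k j"
    using i j k by (simp add: \<alpha>_eq third_moment_swap_right[of M X i j k])
  fix p :: "nat \<Rightarrow> nat" assume p: "bij_betw p {0..<3} {0..<3}"
  let ?t = "\<lambda>m. [i, j, k] ! m"
  have "?t (p m) < d" if "m < 3" for m
  proof -
    have "p m < 3"
      using bij_betw_apply[OF p] that by simp
    then have "p m < length [i, j, k]"
      by simp
    then show ?thesis
      using nth_mem[of "p m" "[i, j, k]"] i j k by auto
  qed
  then show "let t = ?t in \<alpha> (t (p 0)) (t (p 1)) (t (p 2)) = \<alpha> i j k"
    using third_moment_permute[OF p, of M X ?t] i j k by (simp add: \<alpha>_eq Let_def)
qed

end
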